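(* Let $I$ be a proper ideal in $\mathbb{B}_n$, let $Z=(z_1,\dots,z_s)$ be a tuple of distinct Boolean indeterminates, let $m=n-s$, and let $\mathbb{B}_m\subseteq\mathbb{B}_n$ be the subring $\mathbb{F}_2[X\setminus Z]$ generated by the Boolean indeterminates not in $Z$. Assume $F=(f_1,\dots,f_s)$ is a coherently $Z$-separating tuple of Boolean polynomials in $I$ with respect to a term ordering $\sigma$ (i.e. $\operatorname{LT}_\sigma(f_i)=z_i$), and write $f_i=z_i-h_i$ with $h_i\in\mathbb{B}_m$. (a) The reduced Boolean $\sigma$-Gröbner basis of $I$ has the form $\{z_1-\tilde h_1,\dots,z_s-\tilde h_s,g_1,\dots,g_r\}$ with $\tilde h_1,\dots,\tilde h_s,g_1,\dots,g_r\in\mathbb{B}_m$. (b) The $\mathbb{F}_2$-algebra homomorphism $\Phi:\mathbb{B}_n/I\to\mathbb{B}_m/(I\cap\mathbb{B}_m)$ given by $\Phi(x_i+I)=x_i+(I\cap\mathbb{B}_m)$ for $x_i\notin Z$ and $\Phi(x_i+I)=h_j+(I\cap\mathbb{B}_m)$ for $x_i=z_j\in Z$ is well defined and is an isomorphism of $\mathbb{F}_2$-algebras. (c) For every elimination ordering $\tau$ for $Z$, we have $\langle z_1,\dots,z_s\rangle\subseteq\operatorname{LT}_\tau(I)$.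
   Context: $P=\mathbb{F}_2[X_1,\dots,X_n]$, $\mathbb{I}_n=\langle X_1^2-X_1,\dots,X_n^2-X_n\rangle$, $\mathbb{B}_n=P/\mathbb{I}_n$, $x_i=X_i+\mathbb{I}_n$, $X=(x_1,\dots,x_n)$. Every $f\in\mathbb{B}_n$ has a unique representative $F\in P$ that is a sum of square-free terms (canonical representative); $\operatorname{Supp}(f)=\{t+\mathbb{I}_n: t\in\operatorname{Supp}(F)\}$; for a term ordering $\sigma$ on $P$, $\operatorname{LT}_\sigma(f)=\operatorname{LT}_\sigma(F)+\mathbb{I}_n$ and $\operatorname{LT}_\sigma(I)=\langle\operatorname{LT}_\sigma(f): f\in I\rangle$. A Boolean $\sigma$-Gröbner basis of $I$ is a finite $G\subseteq I$ with $\langle\operatorname{LT}_\sigma(g):g\in G\rangle=\operatorname{LT}_\sigma(I)$; it is reduced if it is minimal, and for each $g\in G$ no term of $\operatorname{Supp}(g)$ other than $\operatorname{LT}_\sigma(g)$ lies in $\operatorname{LT}_\sigma(I)$ (over $\mathbb{F}_2$ all elements are monic). A tuple $(f_1,\dots,f_s)$ of Boolean polynomials in $I$ is $Z$-separating if there is a term ordering $\sigma$ with $\operatorname{LT}_\sigma(f_i)=z_i$ for all $i$; it is coherently $Z$-separating if moreover, for all $i\ne j$, no term in $\operatorname{Supp}(f_i)$ is divisible by $z_j$. An elimination ordering for $Z$ is a term ordering in which every term divisible by some $z_i$ is larger than every term not divisible by any $z_i$. *)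

theory Defs
  imports Main
begin

text \<open>Boolean polynomials in B_n = F_2[X_0..X_{n-1}]/(X_i^2 - X_i) are represented by their
 support: a finite set of square-free terms, each term being a subset of the variable
 indices {..<n}. Addition is symmetric difference; multiplication is computed on
 square-free terms (t * u = t Un u) with coefficients mod 2.\<close>

type_synonym bterm = "nat set"
type_synonym bpoly = "nat set set"

definition bpolys :: "nat \<Rightarrow> bpoly set" where
  "bpolys n = {f. f \<subseteq> Pow {..<n}}"

definition bzero :: bpoly where "bzero = {}"
definition bone :: bpoly where "bone = {{}}"
definition bvar :: "nat \<Rightarrow> bpoly" where "bvar i = {{i}}"

definition badd :: "bpoly \<Rightarrow> bpoly \<Rightarrow> bpoly" where
  "badd f g = (f - g) \<union> (g - f)"

definition bmul :: "bpoly \<Rightarrow> bpoly \<Rightarrow> bpoly" where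
  "bmul f g = {t. odd (card {(a, b). a \<in> f \<and> b \<in> g \<and> a \<union> b = t})}"

definition bprod_list :: "bpoly list \<Rightarrow> bpoly" where
  "bprod_list ps = foldr bmul ps bone"

definition bsum :: "'a set \<Rightarrow> ('a \<Rightarrow> bpoly) \<Rightarrow> bpoly" where
  "bsum A g = {u. odd (card {a \<in> A. u \<in> g a})}"

definition bsubst :: "(nat \<Rightarrow> bpoly) \<Rightarrow> bpoly \<Rightarrow> bpoly" where
  "bsubst img f = bsum f (\<lambda>t. bprod_list (map img (sorted_list_of_set t)))"

definition bideal :: "nat \<Rightarrow> bpoly set \<Rightarrow> bool" where
  "bideal n I \<longleftrightarrow> I \<subseteq> bpolys n \<and> bzero \<in> I \<and>
     (\<forall>f\<in>I. \<forall>g\<in>I. badd f g \<in> I) \<and>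
     (\<forall>f\<in>I. \<forall>g\<in>bpolys n. bmul g f \<in> I)"

definition bideal_gen :: "nat \<Rightarrow> bpoly set \<Rightarrow> bpoly set" where
  "bideal_gen n S = \<Inter>{J. bideal n J \<and> S \<subseteq> J}"

definition bmonos :: "nat \<Rightarrow> (nat \<Rightarrow> nat) set" where
  "bmonos n = {\<alpha>. \<forall>i\<ge>n. \<alpha> i = 0}"

definition term_ordering :: "nat \<Rightarrow> ((nat \<Rightarrow> nat) \<Rightarrow> (nat \<Rightarrow> nat) \<Rightarrow> bool) \<Rightarrow> bool" where
  "term_ordering n le \<longleftrightarrow>
     (\<forall>\<alpha>\<in>bmonos n. le \<alpha> \<alpha>) \<and>
     (\<forall>\<alpha>\<in>bmonos n. \<forall>\<beta>\<in>bmonos n. le \<alpha> \<beta> \<and> le \<beta> \<alpha> \<longrightarrow> \<alpha> = \<beta>) \<and>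
     (\<forall>\<alpha>\<in>bmonos n. \<forall>\<beta>\<in>bmonos n. \<forall>\<gamma>\<in>bmonos n. le \<alpha> \<beta> \<and> le \<beta> \<gamma> \<longrightarrow> le \<alpha> \<gamma>) \<and>
     (\<forall>\<alpha>\<in>bmonos n. \<forall>\<beta>\<in>bmonos n. le \<alpha> \<beta> \<or> le \<beta> \<alpha>) \<and>
     (\<forall>\<alpha>\<in>bmonos n. le (\<lambda>_. 0) \<alpha>) \<and>
     (\<forall>\<alpha>\<in>bmonos n. \<forall>\<beta>\<in>bmonos n. \<forall>\<gamma>\<in>bmonos n. le \<alpha> \<beta> \<longrightarrow> le (\<lambda>i. \<alpha> i + \<gamma> i) (\<lambda>i. \<beta> i + \<gamma> i))"

definition sqf :: "bterm \<Rightarrow> (nat \<Rightarrow> nat)" where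
  "sqf t = (\<lambda>i. if i \<in> t then 1 else 0)"

text \<open>Leading term (of the canonical representative), for f nonzero.\<close>
definition bLT :: "((nat \<Rightarrow> nat) \<Rightarrow> (nat \<Rightarrow> nat) \<Rightarrow> bool) \<Rightarrow> bpoly \<Rightarrow> bterm" where
  "bLT le f = (THE t. t \<in> f \<and> (\<forall>u\<in>f. le (sqf u) (sqf t)))"

definition bLT_ideal :: "nat \<Rightarrow> ((nat \<Rightarrow> nat) \<Rightarrow> (nat \<Rightarrow> nat) \<Rightarrow> bool) \<Rightarrow> bpoly set \<Rightarrow> bpoly set" where
  "bLT_ideal n le I = bideal_gen n {{bLT le f} | f. f \<in> I \<and> f \<noteq> bzero}"

definition is_boolean_gb :: "nat \<Rightarrow> ((nat \<Rightarrow> nat) \<Rightarrow> (nat \<Rightarrow> nat) \<Rightarrow> bool) \<Rightarrow> bpoly set \<Rightarrow> bpoly set \<Rightarrow> bool" where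
  "is_boolean_gb n le I G \<longleftrightarrow> finite G \<and> G \<subseteq> I \<and> bzero \<notin> G \<and>
     bideal_gen n {{bLT le g} | g. g \<in> G} = bLT_ideal n le I"

definition is_reduced_boolean_gb :: "nat \<Rightarrow> ((nat \<Rightarrow> nat) \<Rightarrow> (nat \<Rightarrow> nat) \<Rightarrow> bool) \<Rightarrow> bpoly set \<Rightarrow> bpoly set \<Rightarrow> bool" where
  "is_reduced_boolean_gb n le I G \<longleftrightarrow> is_boolean_gb n le I G \<and>
     (\<forall>g\<in>G. {bLT le g} \<notin> bideal_gen n {{bLT le g'} | g'. g' \<in> G - {g}}) \<and>
     (\<forall>g\<in>G. \<forall>t\<in>g. t \<noteq> bLT le g \<longrightarrow> {t} \<notin> bLT_ideal n le I)"

definition coherently_Z_separating ::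
  "nat \<Rightarrow> ((nat \<Rightarrow> nat) \<Rightarrow> (nat \<Rightarrow> nat) \<Rightarrow> bool) \<Rightarrow> bpoly set \<Rightarrow> nat \<Rightarrow> (nat \<Rightarrow> nat) \<Rightarrow> (nat \<Rightarrow> bpoly) \<Rightarrow> bool" where
  "coherently_Z_separating n le I s z f \<longleftrightarrow>
     (\<forall>i<s. f i \<in> I \<and> f i \<noteq> bzero \<and> bLT le (f i) = {z i}) \<and>
     (\<forall>i<s. \<forall>j<s. i \<noteq> j \<longrightarrow> (\<forall>t\<in>f i. z j \<notin> t))"

definition bsubring :: "nat \<Rightarrow> nat set \<Rightarrow> bpoly set" where
  "bsubring n Zs = {f \<in> bpolys n. \<forall>t\<in>f. t \<inter> Zs = {}}"

definition elimination_ordering ::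
  "nat \<Rightarrow> ((nat \<Rightarrow> nat) \<Rightarrow> (nat \<Rightarrow> nat) \<Rightarrow> bool) \<Rightarrow> nat set \<Rightarrow> bool" where
  "elimination_ordering n le Zs \<longleftrightarrow> term_ordering n le \<and>
     (\<forall>\<alpha>\<in>bmonos n. \<forall>\<beta>\<in>bmonos n. (\<exists>z\<in>Zs. \<alpha> z > 0) \<and> (\<forall>z\<in>Zs. \<beta> z = 0)
        \<longrightarrow> le \<beta> \<alpha> \<and> \<beta> \<noteq> \<alpha>)"

end

theory Submission
  imports Defs
begin

text \<open>A Boolean polynomial is determined by the function it induces on \<open>F\<^sub>2\<^sup>n\<close>; this gives
  the ring laws and shows that substitution is a ring homomorphism. The leading terms of a proper
  ideal \<open>I\<close> form an upward closed set \<open>L\<close> of square-free terms, and its minimal elements, each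
  completed by reduction modulo \<open>I\<close>, form the reduced Groebner basis.
  Coherent separation puts every \<open>z\<^sub>j\<close> into \<open>L\<close>, hence every term involving some \<open>z\<^sub>j\<close> as well.
  Such terms cannot occur in the tail of a reduced basis element, nor, by minimality, in a leading
  term other than \<open>z\<^sub>j\<close> itself; this is (a). Since \<open>z\<^sub>j - h\<^sub>j = f\<^sub>j \<in> I\<close>, substituting \<open>h\<^sub>j\<close> for \<open>z\<^sub>j\<close>
  changes a polynomial only modulo \<open>I\<close>, so \<open>\<Phi>(p) \<equiv> p\<close>; this gives (b). Under an elimination
  ordering the terms of \<open>f\<^sub>j\<close> other than \<open>z\<^sub>j\<close> avoid \<open>Z\<close> and are therefore smaller than \<open>z\<^sub>j\<close>,
  which gives (c).\<close>

section \<open>Boolean polynomials as functions\<close>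

text \<open>A Boolean polynomial is evaluated at the point of \<open>F\<^sub>2\<^sup>n\<close> whose support is \<open>x\<close>.\<close>

definition beval :: "bpoly \<Rightarrow> nat set \<Rightarrow> bool" where
  "beval p x = odd (card {t\<in>p. t \<subseteq> x})"

lemma bmul_memD: "t \<in> bmul p q \<Longrightarrow> \<exists>a\<in>p. \<exists>b\<in>q. t = a \<union> b"
proof -
  assume "t \<in> bmul p q"
  then have "card {(a, b). a \<in> p \<and> b \<in> q \<and> a \<union> b = t} \<noteq> 0"
    unfolding bmul_def by (auto elim: oddE)
  then have "{(a, b). a \<in> p \<and> b \<in> q \<and> a \<union> b = t} \<noteq> {}" by force
  then show ?thesis by blast
qed

lemma bsum_memD: "u \<in> bsum A g \<Longrightarrow> \<exists>a\<in>A. u \<in> g a"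
proof -
  assume "u \<in> bsum A g"
  then have "card {a \<in> A. u \<in> g a} \<noteq> 0" unfolding bsum_def by (auto elim: oddE)
  then have "{a \<in> A. u \<in> g a} \<noteq> {}" by force
  then show ?thesis by blast
qed

lemma finite_badd [simp]: "finite p \<Longrightarrow> finite q \<Longrightarrow> finite (badd p q)"
  unfolding badd_def by simp

lemma finite_bmul [simp]:
  assumes "finite p" "finite q"
  shows "finite (bmul p q)"
proof -
  have "bmul p q \<subseteq> (\<lambda>(a, b). a \<union> b) ` (p \<times> q)" by (force dest: bmul_memD)
  then show ?thesis using assms by (meson finite_SigmaI finite_imageI finite_subset)
qed

lemma badd_commute: "badd p q = badd q p"
  unfolding badd_def by blast

lemma badd_cancel_left: "badd p (badd p q) = q"
  unfolding badd_def by blast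

lemma badd_self: "badd p p = bzero"
  unfolding badd_def bzero_def by blast

lemma bsum_insert:
  assumes "finite A" "a \<notin> A"
  shows "bsum (insert a A) g = badd (g a) (bsum A g)"
proof -
  have "u \<in> bsum (insert a A) g \<longleftrightarrow> u \<in> badd (g a) (bsum A g)" for u
  proof (cases "u \<in> g a")
    case True
    then have "{a' \<in> insert a A. u \<in> g a'} = insert a {a' \<in> A. u \<in> g a'}" by auto
    moreover have "card (insert a {a' \<in> A. u \<in> g a'}) = Suc (card {a' \<in> A. u \<in> g a'})"
      using assms by simp
    ultimately show ?thesis using True unfolding bsum_def badd_def by auto
  next
    case False
    then have "{a' \<in> insert a A. u \<in> g a'} = {a' \<in> A. u \<in> g a'}" by auto
    then show ?thesis using False unfolding bsum_def badd_def by auto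
  qed
  then show ?thesis by blast
qed

lemma beval_badd:
  assumes "finite p" "finite q"
  shows "beval (badd p q) x \<longleftrightarrow> beval p x \<noteq> beval q x"
proof -
  define P where "P = {t\<in>p. t \<subseteq> x}"
  define Q where "Q = {t\<in>q. t \<subseteq> x}"
  have fin: "finite P" "finite Q" using assms P_def Q_def by auto
  have "{t\<in>badd p q. t \<subseteq> x} = (P - Q) \<union> (Q - P)"
    unfolding badd_def P_def Q_def by auto
  moreover have "card ((P - Q) \<union> (Q - P)) = card (P - Q) + card (Q - P)"
    using fin by (intro card_Un_disjoint) auto
  moreover have "card P = card (P - Q) + card (P \<inter> Q)" "card Q = card (Q - P) + card (P \<inter> Q)"
    using fin card_Int_Diff[of P Q] card_Int_Diff[of Q P] by (simp_all add: Int_commute)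
  ultimately show ?thesis unfolding beval_def P_def Q_def by auto
qed

lemma beval_bmul:
  assumes "finite p" "finite q"
  shows "beval (bmul p q) x \<longleftrightarrow> beval p x \<and> beval q x"
proof -
  txt \<open>Count the pairs of terms of \<open>p\<close> and \<open>q\<close> below \<open>x\<close> modulo 2, once grouped by their
    product \<open>a \<union> b\<close> and once as \<open>|P| \<cdot> |Q|\<close>.\<close>
  define P where "P = {a\<in>p. a \<subseteq> x}"
  define Q where "Q = {b\<in>q. b \<subseteq> x}"
  define g where "g = (\<lambda>(a::nat set, b::nat set). a \<union> b)"
  define U where "U = g ` (P \<times> Q)"
  define N where "N t = card {(a, b). a \<in> p \<and> b \<in> q \<and> a \<union> b = t}" for t
  have fPQ: "finite (P \<times> Q)" using assms P_def Q_def by auto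
  have fU: "finite U" using fPQ U_def by auto
  have N: "N t = card {ab \<in> P \<times> Q. g ab = t}" if "t \<subseteq> x" for t
  proof -
    have "{(a, b). a \<in> p \<and> b \<in> q \<and> a \<union> b = t} = {ab \<in> P \<times> Q. g ab = t}"
      using that unfolding P_def Q_def g_def by auto
    then show ?thesis unfolding N_def by simp
  qed
  have "{t\<in>bmul p q. t \<subseteq> x} = {t\<in>U. odd (N t)}"
  proof
    show "{t\<in>bmul p q. t \<subseteq> x} \<subseteq> {t\<in>U. odd (N t)}"
    proof
      fix t assume t: "t \<in> {t\<in>bmul p q. t \<subseteq> x}"
      then obtain a b where "a \<in> p" "b \<in> q" "t = a \<union> b" using bmul_memD by blast
      then have "t \<in> U" using t unfolding U_def g_def P_def Q_def by force
      then show "t \<in> {t\<in>U. odd (N t)}" using t unfolding bmul_def N_def by auto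
    qed
    show "{t\<in>U. odd (N t)} \<subseteq> {t\<in>bmul p q. t \<subseteq> x}"
      unfolding U_def g_def P_def Q_def bmul_def N_def by auto
  qed
  then have "beval (bmul p q) x \<longleftrightarrow> odd (sum N U)"
    unfolding beval_def using even_sum_iff[OF fU, of N] by simp
  also have "sum N U = (\<Sum>t\<in>U. \<Sum>ab\<in>{ab. ab \<in> P \<times> Q \<and> g ab = t}. 1)"
  proof (rule sum.cong)
    fix t assume "t \<in> U"
    then have "t \<subseteq> x" unfolding U_def g_def P_def Q_def by auto
    then show "N t = (\<Sum>ab\<in>{ab. ab \<in> P \<times> Q \<and> g ab = t}. 1)" using N by simp
  qed simp
  also have "\<dots> = card (P \<times> Q)"
    unfolding card_eq_sum[of "P \<times> Q"] by (rule sum.group[OF fPQ fU]) (simp add: U_def)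
  finally show ?thesis unfolding beval_def P_def Q_def by (simp add: card_cartesian_product)
qed

lemma beval_bsum:
  assumes fA: "finite A" and fg: "\<forall>a\<in>A. finite (g a)"
  shows "beval (bsum A g) x \<longleftrightarrow> odd (card {a\<in>A. beval (g a) x})"
proof -
  define U where "U = {u\<in>\<Union>(g ` A). u \<subseteq> x}"
  define c where "c u = card {a\<in>A. u \<in> g a}" for u
  have fU: "finite U" using fA fg U_def by auto
  have "{u\<in>bsum A g. u \<subseteq> x} = {u\<in>U. odd (c u)}"
    unfolding U_def c_def using bsum_memD unfolding bsum_def by fastforce
  then have "beval (bsum A g) x \<longleftrightarrow> odd (sum c U)"
    unfolding beval_def using even_sum_iff[OF fU, of c] by simp
  also have "sum c U = (\<Sum>u\<in>U. \<Sum>a\<in>A. if u \<in> g a then 1 else 0)"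
    unfolding c_def using fA by (simp add: sum.inter_filter[symmetric])
  also have "\<dots> = (\<Sum>a\<in>A. \<Sum>u\<in>U. if u \<in> g a then 1 else 0)"
    by (rule sum.swap)
  also have "\<dots> = (\<Sum>a\<in>A. card {u\<in>g a. u \<subseteq> x})"
  proof (rule sum.cong)
    fix a assume "a \<in> A"
    then have "{u\<in>U. u \<in> g a} = {u\<in>g a. u \<subseteq> x}" using U_def by auto
    then show "(\<Sum>u\<in>U. if u \<in> g a then 1 else 0) = card {u\<in>g a. u \<subseteq> x}"
      using fU by (simp add: sum.inter_filter[symmetric])
  qed simp
  finally show ?thesis
    unfolding beval_def using even_sum_iff[OF fA, of "\<lambda>a. card {u\<in>g a. u \<subseteq> x}"] by simp
qed

lemma beval_singleton [simp]: "beval {t} x \<longleftrightarrow> t \<subseteq> x"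
proof -
  have "{u\<in>{t}. u \<subseteq> x} = (if t \<subseteq> x then {t} else {})" by auto
  then show ?thesis unfolding beval_def by simp
qed

lemma beval_bone [simp]: "beval bone x"
  unfolding bone_def by simp

lemma beval_bvar [simp]: "beval (bvar i) x \<longleftrightarrow> i \<in> x"
  unfolding bvar_def by simp

lemma beval_bprod_list:
  "\<forall>p\<in>set ps. finite p \<Longrightarrow> finite (bprod_list ps) \<and> (beval (bprod_list ps) x \<longleftrightarrow> (\<forall>p\<in>set ps. beval p x))"
  by (induction ps) (auto simp: bprod_list_def bone_def beval_bmul)

lemma beval_bsubst:
  assumes "finite p" "\<forall>t\<in>p. finite t \<and> (\<forall>i\<in>t. finite (img i))"
  shows "beval (bsubst img p) x \<longleftrightarrow> beval p {i. beval (img i) x}"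
proof -
  have fin: "\<forall>t\<in>p. finite (bprod_list (map img (sorted_list_of_set t)))"
    using assms(2) beval_bprod_list by auto
  have "beval (bprod_list (map img (sorted_list_of_set t))) x \<longleftrightarrow> t \<subseteq> {i. beval (img i) x}"
    if "t \<in> p" for t
    using beval_bprod_list[of "map img (sorted_list_of_set t)" x] assms(2) that by auto
  then have "{t\<in>p. beval (bprod_list (map img (sorted_list_of_set t))) x} = {t\<in>p. t \<subseteq> {i. beval (img i) x}}"
    by auto
  then show ?thesis
    unfolding bsubst_def beval_bsum[OF assms(1) fin] by (simp add: beval_def)
qed

lemma bpolys_finite: "p \<in> bpolys n \<Longrightarrow> finite p"
  unfolding bpolys_def by (meson finite_Pow_iff finite_lessThan finite_subset mem_Collect_eq)

lemma bpolys_term_subset: "p \<in> bpolys n \<Longrightarrow> t \<in> p \<Longrightarrow> t \<subseteq> {..<n}"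
  unfolding bpolys_def by blast

lemma bpolys_badd: "p \<in> bpolys n \<Longrightarrow> q \<in> bpolys n \<Longrightarrow> badd p q \<in> bpolys n"
  unfolding bpolys_def badd_def by auto

lemma bpolys_bmul: "p \<in> bpolys n \<Longrightarrow> q \<in> bpolys n \<Longrightarrow> bmul p q \<in> bpolys n"
  unfolding bpolys_def by (fastforce dest: bmul_memD)

lemma bpolys_bone: "bone \<in> bpolys n"
  unfolding bpolys_def bone_def by auto

lemma bpolys_bzero: "bzero \<in> bpolys n"
  unfolding bpolys_def bzero_def by auto

lemma bpolys_bvar: "i < n \<Longrightarrow> bvar i \<in> bpolys n"
  unfolding bpolys_def bvar_def by auto

lemma bpolys_singleton: "t \<subseteq> {..<n} \<Longrightarrow> {t} \<in> bpolys n"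
  unfolding bpolys_def by auto

lemma bpolys_bsum: "\<forall>a\<in>A. g a \<in> bpolys n \<Longrightarrow> bsum A g \<in> bpolys n"
  unfolding bpolys_def by (fastforce dest: bsum_memD)

lemma bpolys_bprod_list: "\<forall>p\<in>set ps. p \<in> bpolys n \<Longrightarrow> bprod_list ps \<in> bpolys n"
  by (induction ps) (auto simp: bprod_list_def bpolys_bone bpolys_bmul)

lemma bpolys_bsubst:
  assumes "p \<in> bpolys n" "\<forall>i<n. img i \<in> bpolys n"
  shows "bsubst img p \<in> bpolys n"
  unfolding bsubst_def
proof (intro bpolys_bsum ballI bpolys_bprod_list)
  fix t q assume "t \<in> p" "q \<in> set (map img (sorted_list_of_set t))"
  then show "q \<in> bpolys n"
    using assms bpolys_term_subset[OF assms(1)] finite_subset[of t "{..<n}"] by auto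
qed

text \<open>A polynomial vanishing at every point has a term of minimal cardinality; evaluating at that
  term picks it out alone.\<close>

lemma bpoly_eqI:
  assumes p: "p \<in> bpolys n" and q: "q \<in> bpolys n"
    and eq: "\<And>x. x \<subseteq> {..<n} \<Longrightarrow> beval p x = beval q x"
  shows "p = q"
proof (rule ccontr)
  assume "p \<noteq> q"
  define r where "r = badd p q"
  have "r \<noteq> {}" using \<open>p \<noteq> q\<close> unfolding r_def badd_def by auto
  then obtain t where t: "t \<in> r" "\<forall>u\<in>r. card t \<le> card u"
    using ex_has_least_nat[of "\<lambda>t. t \<in> r" _ card] by blast
  have tn: "t \<subseteq> {..<n}" using t(1) bpolys_badd[OF p q] bpolys_term_subset unfolding r_def by blast
  then have "finite t" by (rule finite_subset) simp
  have "{u\<in>r. u \<subseteq> t} = {t}"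
  proof (intro equalityI subsetI)
    fix u assume u: "u \<in> {u\<in>r. u \<subseteq> t}"
    show "u \<in> {t}"
    proof (rule ccontr)
      assume "u \<notin> {t}"
      then have "u \<subset> t" using u by auto
      then have "card u < card t" using \<open>finite t\<close> by (rule psubset_card_mono[rotated])
      then show False using t u by auto
    qed
  qed (use t in auto)
  then have "beval r t" unfolding beval_def by simp
  moreover have "\<not> beval r t"
    using eq[OF tn] beval_badd[OF bpolys_finite[OF p] bpolys_finite[OF q]] unfolding r_def by simp
  ultimately show False by blast
qed

lemma beval_bsubst_bpolys:
  assumes "p \<in> bpolys n" "\<forall>i<n. img i \<in> bpolys n"
  shows "beval (bsubst img p) x \<longleftrightarrow> beval p {i. beval (img i) x}"
proof (rule beval_bsubst)
  show "finite p" using assms(1) by (rule bpolys_finite)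
  show "\<forall>t\<in>p. finite t \<and> (\<forall>i\<in>t. finite (img i))"
  proof (intro ballI conjI)
    fix t assume "t \<in> p"
    then have t: "t \<subseteq> {..<n}" using assms(1) by (intro bpolys_term_subset)
    then show "finite t" by (rule finite_subset) simp
    show "finite (img i)" if "i \<in> t" for i using t that assms(2) bpolys_finite by blast
  qed
qed

lemma bmul_singleton: "u \<subseteq> {..<n} \<Longrightarrow> t \<subseteq> {..<n} \<Longrightarrow> bmul {u} {t} = {u \<union> t}"
  by (rule bpoly_eqI[of _ n]) (simp_all add: bpolys_bmul bpolys_singleton beval_bmul)

lemma insert_mem_bmul_bvar:
  assumes "t \<in> f" "i \<notin> t" "insert i t \<notin> f"
  shows "insert i t \<in> bmul (bvar i) f"
proof -
  have "{(a, b). a \<in> bvar i \<and> b \<in> f \<and> a \<union> b = insert i t} = {({i}, t)}"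
  proof (intro equalityI subsetI)
    fix ab assume "ab \<in> {(a, b). a \<in> bvar i \<and> b \<in> f \<and> a \<union> b = insert i t}"
    then obtain b where ab: "ab = ({i}, b)" "b \<in> f" "insert i b = insert i t"
      unfolding bvar_def by auto
    have "b - {i} = insert i b - {i}" by simp
    also have "\<dots> = t" using ab(3) assms(2) by simp
    finally have "b - {i} = t" .
    then have "b = t \<or> b = insert i t" by (cases "i \<in> b") auto
    then show "ab \<in> {({i}, t)}" using ab assms(3) by auto
  qed (use assms(1) in \<open>auto simp: bvar_def\<close>)
  then show ?thesis unfolding bmul_def by simp
qed

lemma badd_bmul_telescope:
  assumes "a \<in> bpolys n" "b \<in> bpolys n" "A \<in> bpolys n" "B \<in> bpolys n"
  shows "badd (bmul a A) (bmul b B) = badd (bmul a (badd A B)) (bmul B (badd a b))"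
  using assms
  by (intro bpoly_eqI[of _ n])
    (simp_all add: bpolys_bmul bpolys_badd bpolys_finite beval_bmul beval_badd, blast)

lemma bsubst_badd:
  assumes p: "p \<in> bpolys n" and q: "q \<in> bpolys n" and img: "\<forall>i<n. img i \<in> bpolys n"
  shows "bsubst img (badd p q) = badd (bsubst img p) (bsubst img q)"
proof (rule bpoly_eqI[of _ n])
  fix x
  show "beval (bsubst img (badd p q)) x = beval (badd (bsubst img p) (bsubst img q)) x"
    using bpolys_finite[OF bpolys_bsubst[OF p img]] bpolys_finite[OF bpolys_bsubst[OF q img]]
      bpolys_finite[OF p] bpolys_finite[OF q]
    by (simp add: beval_bsubst_bpolys[OF _ img] bpolys_badd p q beval_badd)
qed (simp_all add: bpolys_bsubst bpolys_badd p q img)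

lemma bsubst_bmul:
  assumes p: "p \<in> bpolys n" and q: "q \<in> bpolys n" and img: "\<forall>i<n. img i \<in> bpolys n"
  shows "bsubst img (bmul p q) = bmul (bsubst img p) (bsubst img q)"
proof (rule bpoly_eqI[of _ n])
  fix x
  show "beval (bsubst img (bmul p q)) x = beval (bmul (bsubst img p) (bsubst img q)) x"
    using bpolys_finite[OF bpolys_bsubst[OF p img]] bpolys_finite[OF bpolys_bsubst[OF q img]]
      bpolys_finite[OF p] bpolys_finite[OF q]
    by (simp add: beval_bsubst_bpolys[OF _ img] bpolys_bmul p q beval_bmul)
qed (simp_all add: bpolys_bsubst bpolys_bmul p q img)

lemma bsubst_bone:
  assumes "\<forall>i<n. img i \<in> bpolys n"
  shows "bsubst img bone = bone"
  using assms
  by (intro bpoly_eqI[of _ n]) (simp_all add: bpolys_bsubst bpolys_bone beval_bsubst_bpolys)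

lemma bsubst_bvar:
  assumes "p \<in> bpolys n"
  shows "bsubst bvar p = p"
  using assms
  by (intro bpoly_eqI[of _ n]) (simp_all add: bpolys_bsubst bpolys_bvar beval_bsubst_bpolys)

lemma bsubring_badd:
  assumes "p \<in> bsubring n Zs" "q \<in> bsubring n Zs"
  shows "badd p q \<in> bsubring n Zs"
proof -
  have "p \<in> bpolys n" "q \<in> bpolys n" "\<forall>t\<in>p \<union> q. t \<inter> Zs = {}"
    using assms unfolding bsubring_def by auto
  moreover have "badd p q \<subseteq> p \<union> q" unfolding badd_def by blast
  ultimately show ?thesis unfolding bsubring_def by (auto simp: bpolys_badd)
qed

lemma bprod_list_avoids:
  "\<forall>q\<in>set ps. \<forall>t\<in>q. t \<inter> Zs = {} \<Longrightarrow> \<forall>t\<in>bprod_list ps. t \<inter> Zs = {}"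
proof (induction ps)
  case Nil
  then show ?case by (simp add: bprod_list_def bone_def)
next
  case (Cons q ps)
  show ?case
  proof
    fix t assume "t \<in> bprod_list (q # ps)"
    then obtain a b where "a \<in> q" "b \<in> bprod_list ps" "t = a \<union> b"
      unfolding bprod_list_def using bmul_memD by fastforce
    then show "t \<inter> Zs = {}" using Cons by auto
  qed
qed

lemma bsubst_bsubring:
  assumes p: "p \<in> bpolys n" and img: "\<forall>i<n. img i \<in> bsubring n Zs"
  shows "bsubst img p \<in> bsubring n Zs"
proof -
  have img': "\<forall>i<n. img i \<in> bpolys n" using img unfolding bsubring_def by blast
  have prod: "\<forall>t\<in>bprod_list (map img (sorted_list_of_set u)). t \<inter> Zs = {}" if u: "u \<in> p" for u
  proof (rule bprod_list_avoids, rule ballI)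
    have un: "u \<subseteq> {..<n}" using bpolys_term_subset[OF p u] .
    fix q assume "q \<in> set (map img (sorted_list_of_set u))"
    then obtain i where "i \<in> u" "q = img i" using finite_subset[OF un finite_lessThan] by auto
    then show "\<forall>t\<in>q. t \<inter> Zs = {}" using img un unfolding bsubring_def by blast
  qed
  have "t \<inter> Zs = {}" if t: "t \<in> bsubst img p" for t
  proof -
    obtain u where "u \<in> p" "t \<in> bprod_list (map img (sorted_list_of_set u))"
      using bsum_memD[OF t[unfolded bsubst_def]] by blast
    then show ?thesis using prod by blast
  qed
  then show ?thesis unfolding bsubring_def using bpolys_bsubst[OF p img'] by blast
qed

lemma badd_bvar_mem_bsubring:
  assumes "g \<in> bpolys n" "{z} \<in> g" "\<forall>v\<in>g. v \<noteq> {z} \<longrightarrow> v \<inter> Zs = {}"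
  shows "badd g (bvar z) \<in> bsubring n Zs"
proof -
  have "badd g (bvar z) = g - {{z}}" using assms(2) unfolding badd_def bvar_def by auto
  then show ?thesis using assms(1,3) unfolding bsubring_def bpolys_def by auto
qed

section \<open>Ideals\<close>

lemma
  assumes "bideal n J"
  shows bideal_subset: "J \<subseteq> bpolys n"
    and bzero_mem_bideal: "bzero \<in> J"
    and badd_mem_bideal: "f \<in> J \<Longrightarrow> g \<in> J \<Longrightarrow> badd f g \<in> J"
    and bmul_mem_bideal: "f \<in> J \<Longrightarrow> g \<in> bpolys n \<Longrightarrow> bmul g f \<in> J"
  using assms unfolding bideal_def by blast+

lemma badd_mem_bideal_iff: "bideal n J \<Longrightarrow> q \<in> J \<Longrightarrow> badd p q \<in> J \<longleftrightarrow> p \<in> J"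
  by (metis badd_commute badd_cancel_left badd_mem_bideal)

lemma bideal_bpolys: "bideal n (bpolys n)"
  unfolding bideal_def using bpolys_bzero bpolys_badd bpolys_bmul by blast

lemma bideal_Inter:
  assumes "F \<noteq> {}" "\<forall>J\<in>F. bideal n J"
  shows "bideal n (\<Inter>F)"
  unfolding bideal_def
proof (intro conjI ballI)
  show "\<Inter>F \<subseteq> bpolys n" using assms bideal_subset by blast
  show "bzero \<in> \<Inter>F" using assms bzero_mem_bideal by blast
next
  fix f g assume "f \<in> \<Inter>F" "g \<in> \<Inter>F"
  then show "badd f g \<in> \<Inter>F" using assms badd_mem_bideal by blast
next
  fix f g assume "f \<in> \<Inter>F" "g \<in> bpolys n"
  then show "bmul g f \<in> \<Inter>F" using assms bmul_mem_bideal by blast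
qed

lemma bideal_bideal_gen: "S \<subseteq> bpolys n \<Longrightarrow> bideal n (bideal_gen n S)"
  unfolding bideal_gen_def using bideal_bpolys by (intro bideal_Inter) auto

lemma bideal_gen_least: "bideal n J \<Longrightarrow> S \<subseteq> J \<Longrightarrow> bideal_gen n S \<subseteq> J"
  unfolding bideal_gen_def by auto

lemma bideal_gen_superset: "S \<subseteq> bideal_gen n S"
  unfolding bideal_gen_def by auto

lemma bideal_gen_mono: "S \<subseteq> T \<Longrightarrow> bideal_gen n S \<subseteq> bideal_gen n T"
  unfolding bideal_gen_def by auto

lemma singleton_mem_bideal_superterm:
  assumes J: "bideal n J" and t: "{t} \<in> J" and tu: "t \<subseteq> u" and u: "u \<subseteq> {..<n}"
  shows "{u} \<in> J"
proof -
  have "t \<subseteq> {..<n}" using tu u by (rule order_trans)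
  then have "bmul {u} {t} = {u \<union> t}" using u by (intro bmul_singleton)
  also have "u \<union> t = u" using tu by blast
  finally have "bmul {u} {t} = {u}" .
  then show ?thesis using bmul_mem_bideal[OF J t bpolys_singleton[OF u]] by simp
qed

lemma bideal_gen_singletons_memD:
  assumes U: "U \<subseteq> Pow {..<n}" and p: "p \<in> bideal_gen n ((\<lambda>u. {u}) ` U)" and v: "v \<in> p"
  shows "\<exists>u\<in>U. u \<subseteq> v"
proof -
  define J where "J = {p \<in> bpolys n. \<forall>v\<in>p. \<exists>u\<in>U. u \<subseteq> v}"
  have J: "bideal n J"
  proof (unfold bideal_def, intro conjI ballI)
    show "J \<subseteq> bpolys n" unfolding J_def by blast
    show "bzero \<in> J" unfolding J_def bzero_def using bpolys_bzero[unfolded bzero_def] by blast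
  next
    fix f g assume "f \<in> J" "g \<in> J"
    then show "badd f g \<in> J" unfolding J_def using bpolys_badd[of f n g] unfolding badd_def by blast
  next
    fix f g assume f: "f \<in> J" and g: "g \<in> bpolys n"
    have "\<exists>u\<in>U. u \<subseteq> v" if v: "v \<in> bmul g f" for v
    proof -
      obtain a b where "b \<in> f" "v = a \<union> b" using bmul_memD[OF v] by blast
      then show ?thesis using f unfolding J_def by blast
    qed
    then show "bmul g f \<in> J" using f g bpolys_bmul[of g n f] unfolding J_def by blast
  qed
  have gens: "(\<lambda>u. {u}) ` U \<subseteq> J"
  proof (rule image_subsetI)
    fix u assume "u \<in> U"
    then show "{u} \<in> J" unfolding J_def using U bpolys_singleton[of u n] by blast
  qed
  have "p \<in> J" using bideal_gen_least[OF J gens] p ..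
  then show ?thesis using v unfolding J_def by blast
qed

lemma bprod_list_congruent:
  assumes I: "bideal n I"
  shows "\<forall>i\<in>set xs. a i \<in> bpolys n \<and> b i \<in> bpolys n \<and> badd (a i) (b i) \<in> I \<Longrightarrow>
    badd (bprod_list (map a xs)) (bprod_list (map b xs)) \<in> I"
proof (induction xs)
  case Nil
  then show ?case using bzero_mem_bideal[OF I] by (simp add: bprod_list_def badd_self)
next
  case (Cons i xs)
  define A where "A = bprod_list (map a xs)"
  define B where "B = bprod_list (map b xs)"
  have ab: "a i \<in> bpolys n" "b i \<in> bpolys n" "badd (a i) (b i) \<in> I" using Cons.prems by auto
  have AB: "A \<in> bpolys n" "B \<in> bpolys n"
    unfolding A_def B_def using Cons.prems by (auto intro!: bpolys_bprod_list)
  have "badd A B \<in> I" unfolding A_def B_def using Cons by simp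
  then have "badd (bmul (a i) (badd A B)) (bmul B (badd (a i) (b i))) \<in> I"
    using badd_mem_bideal[OF I bmul_mem_bideal[OF I _ ab(1)] bmul_mem_bideal[OF I ab(3) AB(2)]] by blast
  then have "badd (bmul (a i) A) (bmul (b i) B) \<in> I"
    by (simp only: badd_bmul_telescope[OF ab(1,2) AB])
  then show ?case unfolding A_def B_def by (simp add: bprod_list_def)
qed

lemma bsum_congruent:
  assumes I: "bideal n I" and A: "finite A"
  shows "\<forall>x\<in>A. badd (f x) (g x) \<in> I \<Longrightarrow> badd (bsum A f) (bsum A g) \<in> I"
  using A
proof (induction A rule: finite_induct)
  case empty
  then show ?case using bzero_mem_bideal[OF I] by (simp add: bsum_def badd_self)
next
  case (insert x A)
  have "badd (f x) (g x) \<in> I" "badd (bsum A f) (bsum A g) \<in> I" using insert by simp_all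
  then have "badd (badd (f x) (g x)) (badd (bsum A f) (bsum A g)) \<in> I" by (rule badd_mem_bideal[OF I])
  moreover have "badd (badd (f x) (g x)) (badd (bsum A f) (bsum A g)) =
      badd (badd (f x) (bsum A f)) (badd (g x) (bsum A g))"
    unfolding badd_def by blast
  ultimately show ?case using insert(1,2) by (simp add: bsum_insert)
qed

lemma bsubst_congruent:
  assumes I: "bideal n I" and p: "p \<in> bpolys n"
    and ab: "\<forall>i<n. a i \<in> bpolys n \<and> b i \<in> bpolys n \<and> badd (a i) (b i) \<in> I"
  shows "badd (bsubst a p) (bsubst b p) \<in> I"
  unfolding bsubst_def
proof (rule bsum_congruent[OF I bpolys_finite[OF p]], rule ballI)
  fix t assume "t \<in> p"
  then have t: "t \<subseteq> {..<n}" using p by (rule bpolys_term_subset[rotated])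
  then have "set (sorted_list_of_set t) = t" using finite_subset[OF t finite_lessThan] by simp
  then show "badd (bprod_list (map a (sorted_list_of_set t))) (bprod_list (map b (sorted_list_of_set t))) \<in> I"
    using ab t by (intro bprod_list_congruent[OF I]) auto
qed

section \<open>Term orderings on square-free terms\<close>

lemma sqf_bmonos: "t \<subseteq> {..<n} \<Longrightarrow> sqf t \<in> bmonos n"
  unfolding sqf_def bmonos_def by auto

lemma inj_sqf: "inj sqf"
proof (rule injI)
  fix t u assume "sqf t = sqf u"
  then have "i \<in> t \<longleftrightarrow> i \<in> u" for i
    using fun_cong[of "sqf t" "sqf u" i] unfolding sqf_def by (auto split: if_splits)
  then show "t = u" by blast
qed

context
  fixes n :: nat and le :: "(nat \<Rightarrow> nat) \<Rightarrow> (nat \<Rightarrow> nat) \<Rightarrow> bool"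
  assumes to: "term_ordering n le"
begin

lemma term_ordering_refl: "t \<subseteq> {..<n} \<Longrightarrow> le (sqf t) (sqf t)"
  using to sqf_bmonos unfolding term_ordering_def by blast

lemma term_ordering_antisym:
  "t \<subseteq> {..<n} \<Longrightarrow> u \<subseteq> {..<n} \<Longrightarrow> le (sqf t) (sqf u) \<Longrightarrow> le (sqf u) (sqf t) \<Longrightarrow> t = u"
proof -
  assume "t \<subseteq> {..<n}" "u \<subseteq> {..<n}" "le (sqf t) (sqf u)" "le (sqf u) (sqf t)"
  then have "sqf t = sqf u" using to sqf_bmonos unfolding term_ordering_def by blast
  then show "t = u" by (rule injD[OF inj_sqf])
qed

lemma term_ordering_trans:
  "t \<subseteq> {..<n} \<Longrightarrow> u \<subseteq> {..<n} \<Longrightarrow> v \<subseteq> {..<n} \<Longrightarrow>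
    le (sqf t) (sqf u) \<Longrightarrow> le (sqf u) (sqf v) \<Longrightarrow> le (sqf t) (sqf v)"
proof -
  assume "t \<subseteq> {..<n}" "u \<subseteq> {..<n}" "v \<subseteq> {..<n}"
  then have "sqf t \<in> bmonos n" "sqf u \<in> bmonos n" "sqf v \<in> bmonos n" by (simp_all add: sqf_bmonos)
  then show "le (sqf t) (sqf u) \<Longrightarrow> le (sqf u) (sqf v) \<Longrightarrow> le (sqf t) (sqf v)"
    using to unfolding term_ordering_def by blast
qed

lemma term_ordering_total: "t \<subseteq> {..<n} \<Longrightarrow> u \<subseteq> {..<n} \<Longrightarrow> le (sqf t) (sqf u) \<or> le (sqf u) (sqf t)"
  using to sqf_bmonos unfolding term_ordering_def by blast

lemma term_ordering_add:
  "\<alpha> \<in> bmonos n \<Longrightarrow> \<beta> \<in> bmonos n \<Longrightarrow> \<gamma> \<in> bmonos n \<Longrightarrow> le \<alpha> \<beta> \<Longrightarrow>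
    le (\<lambda>i. \<alpha> i + \<gamma> i) (\<lambda>i. \<beta> i + \<gamma> i)"
  using to unfolding term_ordering_def by blast

lemma term_ordering_subset:
  assumes tu: "t \<subseteq> u" and u: "u \<subseteq> {..<n}"
  shows "le (sqf t) (sqf u)"
proof -
  have m: "(\<lambda>_. 0) \<in> bmonos n" "sqf (u - t) \<in> bmonos n" "sqf t \<in> bmonos n"
    using u tu sqf_bmonos[of "u - t" n] sqf_bmonos[of t n] unfolding bmonos_def by auto
  then have "le (\<lambda>_. 0) (sqf (u - t))" using to unfolding term_ordering_def by blast
  then have "le (\<lambda>i. 0 + sqf t i) (\<lambda>i. sqf (u - t) i + sqf t i)"
    using term_ordering_add[OF m] by simp
  moreover have "(\<lambda>i. sqf (u - t) i + sqf t i) = sqf u"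
    using tu unfolding sqf_def by (intro ext) auto
  ultimately show ?thesis by simp
qed

lemma term_ordering_insert:
  assumes i: "i < n" "i \<notin> t" and v: "v \<subseteq> {..<n}" and t: "t \<subseteq> {..<n}" and vt: "le (sqf v) (sqf t)"
  shows "le (sqf (insert i v)) (sqf (insert i t))"
proof (cases "i \<in> v")
  case True
  have "le (sqf t) (sqf (insert i t))" using t i by (intro term_ordering_subset) auto
  then show ?thesis
    using term_ordering_trans[of v t "insert i t"] True v t i vt by (simp add: insert_absorb)
next
  case False
  have m: "sqf v \<in> bmonos n" "sqf t \<in> bmonos n" "sqf {i} \<in> bmonos n"
    using v t i sqf_bmonos[of v n] sqf_bmonos[of t n] sqf_bmonos[of "{i}" n] by auto
  have "(\<lambda>j. sqf v j + sqf {i} j) = sqf (insert i v)" "(\<lambda>j. sqf t j + sqf {i} j) = sqf (insert i t)"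
    unfolding sqf_def using False i by (auto intro!: ext)
  then show ?thesis using term_ordering_add[OF m vt] by simp
qed

lemma term_ordering_has_greatest:
  "finite g \<Longrightarrow> g \<noteq> {} \<Longrightarrow> g \<subseteq> Pow {..<n} \<Longrightarrow> \<exists>t\<in>g. \<forall>u\<in>g. le (sqf u) (sqf t)"
proof (induction g rule: finite_ne_induct)
  case (singleton x)
  then show ?case using term_ordering_refl[of x] by auto
next
  case (insert x F)
  then obtain t where t: "t \<in> F" "\<forall>u\<in>F. le (sqf u) (sqf t)" by blast
  have x: "x \<subseteq> {..<n}" and tn: "t \<subseteq> {..<n}" and F: "F \<subseteq> Pow {..<n}"
    using insert.prems t by auto
  show ?case
  proof (cases "le (sqf x) (sqf t)")
    case True
    then show ?thesis using t by auto
  next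
    case False
    then have tx: "le (sqf t) (sqf x)" using term_ordering_total[OF x tn] by blast
    have "le (sqf u) (sqf x)" if "u \<in> F" for u
      using term_ordering_trans[OF _ tn x _ tx, of u] that t F by blast
    then have "\<forall>u\<in>F. le (sqf u) (sqf x)" by blast
    then show ?thesis using term_ordering_refl[OF x] by auto
  qed
qed

lemma bLT_eqI:
  assumes "g \<subseteq> Pow {..<n}" "t \<in> g" "\<forall>u\<in>g. le (sqf u) (sqf t)"
  shows "bLT le g = t"
  unfolding bLT_def
proof (rule the_equality)
  show "t \<in> g \<and> (\<forall>u\<in>g. le (sqf u) (sqf t))" using assms by blast
  fix t' assume "t' \<in> g \<and> (\<forall>u\<in>g. le (sqf u) (sqf t'))"
  then show "t' = t" using term_ordering_antisym[of t' t] assms by blast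
qed

lemma
  assumes g: "g \<in> bpolys n" and ne: "g \<noteq> bzero"
  shows bLT_mem: "bLT le g \<in> g"
    and bLT_greatest: "u \<in> g \<Longrightarrow> le (sqf u) (sqf (bLT le g))"
    and bLT_subset: "bLT le g \<subseteq> {..<n}"
proof -
  have gp: "g \<subseteq> Pow {..<n}" using g unfolding bpolys_def by simp
  obtain t where t: "t \<in> g" "\<forall>u\<in>g. le (sqf u) (sqf t)"
    using term_ordering_has_greatest[OF bpolys_finite[OF g] _ gp] ne unfolding bzero_def by blast
  have "bLT le g = t" by (rule bLT_eqI[OF gp t])
  then show "bLT le g \<in> g" "u \<in> g \<Longrightarrow> le (sqf u) (sqf (bLT le g))" "bLT le g \<subseteq> {..<n}"
    using t gp by auto
qed

lemma
  assumes f: "f \<in> bpolys n" "f \<noteq> bzero" and i: "i < n" "i \<notin> bLT le f"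
  shows insert_bLT_mem_bmul_bvar: "insert i (bLT le f) \<in> bmul (bvar i) f"
    and bLT_bmul_bvar: "bLT le (bmul (bvar i) f) = insert i (bLT le f)"
proof -
  let ?t = "bLT le f"
  have tn: "?t \<subseteq> {..<n}" and fp: "f \<subseteq> Pow {..<n}"
    using bLT_subset[OF f] f(1) unfolding bpolys_def by auto
  have itn: "insert i ?t \<subseteq> {..<n}" using tn i by auto
  have "insert i ?t \<notin> f"
  proof
    assume "insert i ?t \<in> f"
    then have "le (sqf (insert i ?t)) (sqf ?t)" using bLT_greatest[OF f] by blast
    moreover have "le (sqf ?t) (sqf (insert i ?t))" using term_ordering_subset[OF _ itn] by blast
    ultimately show False using term_ordering_antisym[OF itn tn] i by blast
  qed
  then show mem: "insert i ?t \<in> bmul (bvar i) f"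
    using insert_mem_bmul_bvar bLT_mem[OF f] i(2) by blast
  have "le (sqf u) (sqf (insert i ?t))" if u: "u \<in> bmul (bvar i) f" for u
  proof -
    obtain b where b: "b \<in> f" "u = insert i b" using bmul_memD[OF u] unfolding bvar_def by blast
    then show ?thesis
      using term_ordering_insert[OF i _ tn bLT_greatest[OF f b(1)]] fp by blast
  qed
  moreover have "bmul (bvar i) f \<subseteq> Pow {..<n}"
    using bpolys_bmul[OF bpolys_bvar[OF i(1)] f(1)] unfolding bpolys_def by simp
  ultimately show "bLT le (bmul (bvar i) f) = insert i ?t" using mem by (intro bLT_eqI) auto
qed

end

section \<open>Leading terms and reduced Groebner bases\<close>

lemma
  assumes "is_reduced_boolean_gb n le I G"
  shows reduced_gb_boolean_gb: "is_boolean_gb n le I G"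
    and reduced_gb_subset: "G \<subseteq> I"
    and reduced_gb_nonzero: "bzero \<notin> G"
    and reduced_gb_finite: "finite G"
  using assms unfolding is_reduced_boolean_gb_def is_boolean_gb_def by blast+

locale ordered_bideal =
  fixes n :: nat and I :: "bpoly set" and le :: "(nat \<Rightarrow> nat) \<Rightarrow> (nat \<Rightarrow> nat) \<Rightarrow> bool"
  assumes ideal: "bideal n I" and proper: "bone \<notin> I" and to: "term_ordering n le"
begin

definition lead_terms :: "bterm set" where
  "lead_terms = {bLT le f | f. f \<in> I \<and> f \<noteq> bzero}"

lemma ideal_bpolys: "f \<in> I \<Longrightarrow> f \<in> bpolys n"
  using bideal_subset[OF ideal] by blast

lemma bLT_mem_lead_terms: "f \<in> I \<Longrightarrow> f \<noteq> bzero \<Longrightarrow> bLT le f \<in> lead_terms"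
  unfolding lead_terms_def by blast

lemma lead_termsE:
  assumes "t \<in> lead_terms"
  obtains f where "f \<in> I" "f \<noteq> bzero" "bLT le f = t"
  using assms unfolding lead_terms_def by blast

lemma lead_terms_subset: "t \<in> lead_terms \<Longrightarrow> t \<subseteq> {..<n}"
  by (erule lead_termsE) (use bLT_subset[OF to ideal_bpolys] in blast)

lemma finite_lead_terms: "finite lead_terms"
  by (rule finite_subset[of _ "Pow {..<n}"]) (use lead_terms_subset in auto)

lemma insert_mem_lead_terms:
  assumes t: "t \<in> lead_terms" and i: "i < n"
  shows "insert i t \<in> lead_terms"
proof (cases "i \<in> t")
  case False
  obtain f where f: "f \<in> I" "f \<noteq> bzero" "bLT le f = t" using t by (rule lead_termsE)
  note fb = ideal_bpolys[OF f(1)]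
  have "bmul (bvar i) f \<in> I" using bmul_mem_bideal[OF ideal f(1) bpolys_bvar[OF i]] .
  moreover have "bmul (bvar i) f \<noteq> bzero"
    using insert_bLT_mem_bmul_bvar[OF to fb f(2) i] False f(3) unfolding bzero_def by blast
  ultimately show ?thesis
    using bLT_mem_lead_terms bLT_bmul_bvar[OF to fb f(2) i] False f(3) by metis
qed (use t in \<open>simp add: insert_absorb\<close>)

lemma lead_terms_upward_closed:
  assumes t: "t \<in> lead_terms" and tu: "t \<subseteq> u" and u: "u \<subseteq> {..<n}"
  shows "u \<in> lead_terms"
proof -
  have "t \<union> D \<in> lead_terms" if "finite D" "D \<subseteq> {..<n}" for D
    using that by (induction D rule: finite_induct) (simp_all add: t insert_mem_lead_terms)
  moreover have "finite (u - t)" using u finite_subset[of "u - t" "{..<n}"] by blast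
  ultimately have "t \<union> (u - t) \<in> lead_terms" using u by blast
  then show ?thesis using tu by (simp add: Un_Diff_cancel sup_absorb2)
qed

lemma empty_notin_lead_terms: "{} \<notin> lead_terms"
proof
  assume "{} \<in> lead_terms"
  then obtain f where f: "f \<in> I" "f \<noteq> bzero" "bLT le f = {}" by (rule lead_termsE)
  note fb = ideal_bpolys[OF f(1)]
  have "u = {}" if "u \<in> f" for u
  proof -
    have un: "u \<subseteq> {..<n}" using bpolys_term_subset[OF fb that] .
    have "le (sqf u) (sqf {})" using bLT_greatest[OF to fb f(2) that] f(3) by simp
    moreover have "le (sqf {}) (sqf u)" using term_ordering_subset[OF to _ un] by blast
    ultimately show "u = {}" using term_ordering_antisym[OF to un] by blast
  qed
  then have "f = bone" using f(2) unfolding bone_def bzero_def by auto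
  then show False using f(1) proper by simp
qed

lemma bLT_ideal_eq: "bLT_ideal n le I = bideal_gen n ((\<lambda>u. {u}) ` lead_terms)"
proof -
  have "{{bLT le f} | f. f \<in> I \<and> f \<noteq> bzero} = (\<lambda>u. {u}) ` lead_terms"
    unfolding lead_terms_def image_def by blast
  then show ?thesis unfolding bLT_ideal_def by simp
qed

lemma singleton_mem_bLT_ideal_iff:
  assumes t: "t \<subseteq> {..<n}"
  shows "{t} \<in> bLT_ideal n le I \<longleftrightarrow> t \<in> lead_terms"
proof
  have L: "lead_terms \<subseteq> Pow {..<n}" using lead_terms_subset by blast
  assume "{t} \<in> bLT_ideal n le I"
  then have "{t} \<in> bideal_gen n ((\<lambda>u. {u}) ` lead_terms)" unfolding bLT_ideal_eq .
  then obtain u where "u \<in> lead_terms" "u \<subseteq> t"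
    using bideal_gen_singletons_memD[OF L _ singletonI] by blast
  then show "t \<in> lead_terms" using lead_terms_upward_closed[OF _ _ t] by blast
next
  assume "t \<in> lead_terms"
  then have "{t} \<in> (\<lambda>u. {u}) ` lead_terms" by (rule imageI)
  then show "{t} \<in> bLT_ideal n le I"
    unfolding bLT_ideal_eq by (rule subsetD[OF bideal_gen_superset])
qed

text \<open>Cancelling the largest leading term occurring in \<open>r\<close> strictly shrinks this set, which makes
  reduction terminate.\<close>

definition lead_shadow :: "bpoly \<Rightarrow> bterm set" where
  "lead_shadow r = {w \<in> Pow {..<n}. \<exists>v\<in>r. v \<in> lead_terms \<and> le (sqf w) (sqf v)}"

lemma reduction_step:
  assumes r: "r \<in> bpolys n" and v: "v \<in> r" "v \<in> lead_terms"
  shows "\<exists>r'\<in>bpolys n. badd r r' \<in> I \<and> lead_shadow r' \<subset> lead_shadow r"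
proof -
  define B where "B = {v\<in>r. v \<in> lead_terms}"
  have "finite B" "B \<noteq> {}" "B \<subseteq> Pow {..<n}"
    using bpolys_finite[OF r] v lead_terms_subset unfolding B_def by auto
  then obtain u where u: "u \<in> r" "u \<in> lead_terms" "\<forall>v\<in>B. le (sqf v) (sqf u)"
    using term_ordering_has_greatest[OF to] unfolding B_def by blast
  have un: "u \<subseteq> {..<n}" using u(2) lead_terms_subset by blast
  obtain f where f: "f \<in> I" "f \<noteq> bzero" "bLT le f = u" using u(2) by (rule lead_termsE)
  note fb = ideal_bpolys[OF f(1)]
  define r' where "r' = badd r f"
  have below: "le (sqf w) (sqf u)" if "w \<in> r'" "w \<in> lead_terms" for w
    using that u(3) bLT_greatest[OF to fb f(2)] f(3) unfolding r'_def badd_def B_def by auto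
  have "lead_shadow r' \<subseteq> lead_shadow r"
  proof
    fix w assume "w \<in> lead_shadow r'"
    then obtain v where w: "w \<subseteq> {..<n}" and v: "v \<in> r'" "v \<in> lead_terms" "le (sqf w) (sqf v)"
      unfolding lead_shadow_def by blast
    have "le (sqf w) (sqf u)"
      using term_ordering_trans[OF to w lead_terms_subset[OF v(2)] un v(3) below[OF v(1,2)]] .
    then show "w \<in> lead_shadow r" unfolding lead_shadow_def using w u(1,2) by blast
  qed
  moreover have "u \<in> lead_shadow r"
    unfolding lead_shadow_def using un u(1,2) term_ordering_refl[OF to un] by blast
  moreover have "u \<notin> lead_shadow r'"
  proof
    assume "u \<in> lead_shadow r'"
    then obtain v where v: "v \<in> r'" "v \<in> lead_terms" "le (sqf u) (sqf v)"
      unfolding lead_shadow_def by blast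
    have "v = u"
      using term_ordering_antisym[OF to lead_terms_subset[OF v(2)] un below[OF v(1,2)] v(3)] .
    then show False using v(1) u(1) bLT_mem[OF to fb f(2)] f(3) unfolding r'_def badd_def by blast
  qed
  moreover have "r' \<in> bpolys n" "badd r r' \<in> I"
    unfolding r'_def using bpolys_badd[OF r fb] f(1) by (simp_all add: badd_cancel_left)
  ultimately show ?thesis by blast
qed

lemma exists_normal_form: "p \<in> bpolys n \<Longrightarrow> \<exists>r\<in>bpolys n. badd p r \<in> I \<and> (\<forall>v\<in>r. v \<notin> lead_terms)"
proof (induction "card (lead_shadow p)" arbitrary: p rule: less_induct)
  case less
  show ?case
  proof (cases "\<exists>v\<in>p. v \<in> lead_terms")
    case False
    then show ?thesis
      using less.prems bzero_mem_bideal[OF ideal] by (intro bexI[of _ p]) (auto simp: badd_self)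
  next
    case True
    then obtain r' where r': "r' \<in> bpolys n" "badd p r' \<in> I" "lead_shadow r' \<subset> lead_shadow p"
      using reduction_step less.prems by blast
    have "finite (lead_shadow p)" unfolding lead_shadow_def by simp
    then have "card (lead_shadow r') < card (lead_shadow p)" using r'(3) by (rule psubset_card_mono)
    then obtain r where r: "r \<in> bpolys n" "badd r' r \<in> I" "\<forall>v\<in>r. v \<notin> lead_terms"
      using less.hyps r'(1) by blast
    have "badd p r = badd (badd p r') (badd r' r)" unfolding badd_def by blast
    then show ?thesis
      using badd_mem_bideal[OF ideal r'(2) r(2)] r(1,3) by (intro bexI[of _ r]) auto
  qed
qed

definition min_lead_terms :: "bterm set" where
  "min_lead_terms = {t\<in>lead_terms. \<forall>t'\<in>lead_terms. t' \<subseteq> t \<longrightarrow> t' = t}"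

lemma min_lead_terms_subset: "min_lead_terms \<subseteq> lead_terms"
  unfolding min_lead_terms_def by blast

lemma min_lead_term_below:
  assumes "u \<in> lead_terms"
  shows "\<exists>t\<in>min_lead_terms. t \<subseteq> u"
proof -
  obtain t where "t \<in> lead_terms" "t \<subseteq> u" "\<forall>t'\<in>lead_terms. t' \<subseteq> t \<longrightarrow> t = t'"
    using finite_has_minimal2[OF finite_lead_terms assms] by blast
  then show ?thesis unfolding min_lead_terms_def by (intro bexI[of _ t]) auto
qed

lemma exists_reduced_poly:
  assumes t: "t \<in> lead_terms"
  shows "\<exists>g. g \<in> I \<and> t \<in> g \<and> bLT le g = t \<and> (\<forall>v\<in>g. v \<noteq> t \<longrightarrow> v \<notin> lead_terms)"
proof -
  obtain f where f: "f \<in> I" "f \<noteq> bzero" "bLT le f = t" using t by (rule lead_termsE)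
  note fb = ideal_bpolys[OF f(1)]
  have tf: "t \<in> f" using bLT_mem[OF to fb f(2)] f(3) by simp
  have "f - {t} \<in> bpolys n" using fb unfolding bpolys_def by blast
  then obtain r where r: "r \<in> bpolys n" "badd (f - {t}) r \<in> I" "\<forall>v\<in>r. v \<notin> lead_terms"
    using exists_normal_form by blast
  define g where "g = insert t r"
  have "t \<notin> r" using r(3) t by blast
  then have "g = badd f (badd (f - {t}) r)" unfolding g_def badd_def using tf by auto
  then have gI: "g \<in> I" using badd_mem_bideal[OF ideal f(1) r(2)] by simp
  have gz: "g \<noteq> bzero" unfolding g_def bzero_def by blast
  have "bLT le g \<in> g" "bLT le g \<in> lead_terms"
    using bLT_mem[OF to ideal_bpolys[OF gI] gz] bLT_mem_lead_terms[OF gI gz] .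
  then have "bLT le g = t" using r(3) unfolding g_def by blast
  moreover have "t \<in> g" "\<forall>v\<in>g. v \<noteq> t \<longrightarrow> v \<notin> lead_terms" using r(3) unfolding g_def by auto
  ultimately show ?thesis using gI by (intro exI[of _ g]) simp
qed

definition reduced_poly :: "bterm \<Rightarrow> bpoly" where
  "reduced_poly t = (SOME g. g \<in> I \<and> t \<in> g \<and> bLT le g = t \<and> (\<forall>v\<in>g. v \<noteq> t \<longrightarrow> v \<notin> lead_terms))"

lemma
  assumes "t \<in> lead_terms"
  shows reduced_poly_mem: "reduced_poly t \<in> I"
    and mem_reduced_poly: "t \<in> reduced_poly t"
    and bLT_reduced_poly: "bLT le (reduced_poly t) = t"
    and reduced_poly_tail: "v \<in> reduced_poly t \<Longrightarrow> v \<noteq> t \<Longrightarrow> v \<notin> lead_terms"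
proof -
  have "reduced_poly t \<in> I \<and> t \<in> reduced_poly t \<and> bLT le (reduced_poly t) = t \<and>
      (\<forall>v\<in>reduced_poly t. v \<noteq> t \<longrightarrow> v \<notin> lead_terms)"
    unfolding reduced_poly_def by (rule someI_ex[OF exists_reduced_poly[OF assms]])
  then show "reduced_poly t \<in> I" "t \<in> reduced_poly t" "bLT le (reduced_poly t) = t"
    "v \<in> reduced_poly t \<Longrightarrow> v \<noteq> t \<Longrightarrow> v \<notin> lead_terms"
    by blast+
qed

lemma lead_term_gens_reduced_poly:
  assumes "A \<subseteq> lead_terms"
  shows "{{bLT le g} | g. g \<in> reduced_poly ` A} = (\<lambda>t. {t}) ` A"
proof -
  have "{bLT le g} = {t}" if "t \<in> A" "g = reduced_poly t" for g t
    using that assms bLT_reduced_poly by blast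
  then show ?thesis by blast
qed

lemma bideal_gen_min_lead_terms: "bideal_gen n ((\<lambda>t. {t}) ` min_lead_terms) = bLT_ideal n le I"
proof
  show "bideal_gen n ((\<lambda>t. {t}) ` min_lead_terms) \<subseteq> bLT_ideal n le I"
    unfolding bLT_ideal_eq using min_lead_terms_subset by (intro bideal_gen_mono) blast
next
  have gens: "(\<lambda>t. {t}) ` min_lead_terms \<subseteq> bpolys n"
  proof (rule image_subsetI)
    fix t assume "t \<in> min_lead_terms"
    then show "{t} \<in> bpolys n" using min_lead_terms_subset lead_terms_subset bpolys_singleton by blast
  qed
  note J = bideal_bideal_gen[OF gens]
  have "{u} \<in> bideal_gen n ((\<lambda>t. {t}) ` min_lead_terms)" if u: "u \<in> lead_terms" for u
  proof -
    obtain t where t: "t \<in> min_lead_terms" "t \<subseteq> u" using min_lead_term_below[OF u] by blast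
    then have "{t} \<in> bideal_gen n ((\<lambda>t. {t}) ` min_lead_terms)"
      by (intro subsetD[OF bideal_gen_superset] imageI)
    then show ?thesis
      using singleton_mem_bideal_superterm[OF J _ t(2) lead_terms_subset[OF u]] by blast
  qed
  then show "bLT_ideal n le I \<subseteq> bideal_gen n ((\<lambda>t. {t}) ` min_lead_terms)"
    unfolding bLT_ideal_eq by (intro bideal_gen_least[OF J]) blast
qed

lemma min_lead_term_not_redundant:
  assumes t: "t \<in> min_lead_terms"
  shows "{t} \<notin> bideal_gen n ((\<lambda>t. {t}) ` (min_lead_terms - {t}))"
proof
  have sub: "min_lead_terms - {t} \<subseteq> Pow {..<n}"
    using min_lead_terms_subset lead_terms_subset by blast
  assume "{t} \<in> bideal_gen n ((\<lambda>t. {t}) ` (min_lead_terms - {t}))"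
  then obtain t' where t': "t' \<in> min_lead_terms - {t}" "t' \<subseteq> t"
    using bideal_gen_singletons_memD[OF sub _ singletonI] by blast
  then have "t' \<in> lead_terms" "t' \<noteq> t" using min_lead_terms_subset by auto
  then show False using t t'(2) unfolding min_lead_terms_def by blast
qed

theorem reduced_gb_exists: "\<exists>G. is_reduced_boolean_gb n le I G"
proof -
  define G where "G = reduced_poly ` min_lead_terms"
  note T = min_lead_terms_subset
  have inj: "inj_on reduced_poly min_lead_terms"
  proof (rule inj_onI)
    fix t u assume "t \<in> min_lead_terms" "u \<in> min_lead_terms" "reduced_poly t = reduced_poly u"
    then show "t = u" using T bLT_reduced_poly by (metis subsetD)
  qed
  have "finite G" unfolding G_def using finite_subset[OF T finite_lead_terms] by simp
  moreover have "G \<subseteq> I"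
    unfolding G_def using T by (auto intro: reduced_poly_mem)
  moreover have "bzero \<notin> G"
    unfolding G_def bzero_def using T mem_reduced_poly by fastforce
  moreover have "bideal_gen n {{bLT le g} | g. g \<in> G} = bLT_ideal n le I"
    unfolding G_def lead_term_gens_reduced_poly[OF T] by (rule bideal_gen_min_lead_terms)
  moreover have "{bLT le g} \<notin> bideal_gen n {{bLT le g'} | g'. g' \<in> G - {g}}" if g: "g \<in> G" for g
  proof -
    obtain t where t: "t \<in> min_lead_terms" "g = reduced_poly t" using g unfolding G_def by blast
    have "G - {g} = reduced_poly ` (min_lead_terms - {t})"
      unfolding G_def t(2) using inj t(1) by (simp add: inj_on_image_set_diff)
    then have "{{bLT le g'} | g'. g' \<in> G - {g}} = (\<lambda>t. {t}) ` (min_lead_terms - {t})"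
      using T by (simp only:) (rule lead_term_gens_reduced_poly, blast)
    moreover have "bLT le g = t" using t T bLT_reduced_poly by blast
    ultimately show ?thesis using min_lead_term_not_redundant[OF t(1)] by simp
  qed
  moreover have "{v} \<notin> bLT_ideal n le I" if g: "g \<in> G" and v: "v \<in> g" "v \<noteq> bLT le g" for g v
  proof -
    obtain t where t: "t \<in> lead_terms" "g = reduced_poly t" using g T unfolding G_def by blast
    then have "v \<notin> lead_terms" using v reduced_poly_tail bLT_reduced_poly by simp
    moreover have "v \<subseteq> {..<n}" using bpolys_term_subset[OF ideal_bpolys[OF reduced_poly_mem[OF t(1)]]] v t by simp
    ultimately show ?thesis using singleton_mem_bLT_ideal_iff by simp
  qed
  ultimately have "is_reduced_boolean_gb n le I G"
    unfolding is_reduced_boolean_gb_def is_boolean_gb_def by (intro conjI ballI impI) simp_all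
  then show ?thesis ..
qed

lemma boolean_gb_lead_term_dvd:
  assumes G: "is_boolean_gb n le I G" and v: "v \<in> lead_terms"
  shows "\<exists>g\<in>G. bLT le g \<subseteq> v"
proof -
  have gen: "bideal_gen n {{bLT le g} | g. g \<in> G} = bLT_ideal n le I"
    and GI: "G \<subseteq> I" and G0: "bzero \<notin> G"
    using G unfolding is_boolean_gb_def by blast+
  have eq: "{{bLT le g} | g. g \<in> G} = (\<lambda>u. {u}) ` (bLT le ` G)" by auto
  have LG: "bLT le ` G \<subseteq> Pow {..<n}"
  proof (rule image_subsetI)
    fix g assume "g \<in> G"
    then show "bLT le g \<in> Pow {..<n}" using bLT_subset[OF to ideal_bpolys] GI G0 by blast
  qed
  have "{v} \<in> bLT_ideal n le I"
    using singleton_mem_bLT_ideal_iff[OF lead_terms_subset[OF v]] v by simp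
  then have "{v} \<in> bideal_gen n ((\<lambda>u. {u}) ` (bLT le ` G))" using gen eq by simp
  then show ?thesis using bideal_gen_singletons_memD[OF LG _ singletonI] by blast
qed

lemma coherently_Z_separating_lead_terms:
  assumes "coherently_Z_separating n le I s z f"
  shows "\<forall>j<s. {z j} \<in> lead_terms"
  using assms bLT_mem_lead_terms unfolding coherently_Z_separating_def by metis

lemma reduced_gb_tail_notin_lead_terms:
  assumes G: "is_reduced_boolean_gb n le I G" and g: "g \<in> G" and v: "v \<in> g" "v \<noteq> bLT le g"
  shows "v \<notin> lead_terms"
proof -
  have "{v} \<notin> bLT_ideal n le I" and "g \<in> I"
    using G g v unfolding is_reduced_boolean_gb_def is_boolean_gb_def by blast+
  moreover have "v \<subseteq> {..<n}" using bpolys_term_subset[OF ideal_bpolys[OF \<open>g \<in> I\<close>] v(1)] .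
  ultimately show ?thesis using singleton_mem_bLT_ideal_iff by blast
qed

lemma reduced_gb_lead_avoids:
  assumes G: "is_reduced_boolean_gb n le I G" and g: "g \<in> G" "g' \<in> G" "g' \<noteq> g" and g': "bLT le g' = {z}"
  shows "z \<notin> bLT le g"
proof
  assume z: "z \<in> bLT le g"
  define Gen where "Gen = {{bLT le g''} | g''. g'' \<in> G - {g}}"
  note GI = reduced_gb_subset[OF G] and G0 = reduced_gb_nonzero[OF G]
  have min: "{bLT le g} \<notin> bideal_gen n Gen"
    using G g(1) unfolding is_reduced_boolean_gb_def Gen_def by blast
  have LT: "bLT le h \<subseteq> {..<n}" if "h \<in> G" for h
    using bLT_subset[OF to ideal_bpolys] GI G0 that by blast
  have "Gen \<subseteq> bpolys n" unfolding Gen_def using LT bpolys_singleton by blast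
  note J = bideal_bideal_gen[OF this]
  have "{{z}} \<in> Gen" unfolding Gen_def using g g' by blast
  then have "{{z}} \<in> bideal_gen n Gen" by (rule subsetD[OF bideal_gen_superset])
  then have "{bLT le g} \<in> bideal_gen n Gen"
    using singleton_mem_bideal_superterm[OF J _ _ LT[OF g(1)]] z by blast
  then show False using min by contradiction
qed

context
  fixes Zs :: "nat set"
  assumes Zs_lead: "\<forall>z\<in>Zs. {z} \<in> lead_terms"
begin

lemma reduced_gb_tail_avoids:
  assumes G: "is_reduced_boolean_gb n le I G" and g: "g \<in> G" and v: "v \<in> g" "v \<noteq> bLT le g"
  shows "v \<inter> Zs = {}"
proof (rule ccontr)
  assume "v \<inter> Zs \<noteq> {}"
  then obtain z where z: "z \<in> Zs" "{z} \<subseteq> v" by blast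
  have "v \<subseteq> {..<n}" using bpolys_term_subset[OF ideal_bpolys v(1)] reduced_gb_subset[OF G] g by blast
  then have "v \<in> lead_terms" using lead_terms_upward_closed Zs_lead z by blast
  then show False using reduced_gb_tail_notin_lead_terms[OF G g v] by contradiction
qed

lemma reduced_gb_lead_var:
  assumes G: "is_reduced_boolean_gb n le I G" and z: "z \<in> Zs"
  shows "\<exists>g\<in>G. bLT le g = {z}"
proof -
  obtain g where g: "g \<in> G" "bLT le g \<subseteq> {z}"
    using boolean_gb_lead_term_dvd[OF reduced_gb_boolean_gb[OF G]] Zs_lead z by blast
  have "bLT le g \<in> lead_terms"
    using bLT_mem_lead_terms g(1) reduced_gb_subset[OF G] reduced_gb_nonzero[OF G] by blast
  then have "bLT le g \<noteq> {}" using empty_notin_lead_terms by auto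
  then show ?thesis using g by blast
qed

end

text \<open>Part (a). Of the separation hypothesis only the fact that each \<open>z\<^sub>j\<close> is a leading term is used.\<close>

theorem reduced_gb_split:
  fixes s :: nat and z :: "nat \<Rightarrow> nat" and G :: "bpoly set"
  assumes zL: "\<forall>j<s. {z j} \<in> lead_terms" and G: "is_reduced_boolean_gb n le I G"
  shows "\<exists>ht :: nat \<Rightarrow> bpoly. \<exists>gs :: bpoly list.
           (\<forall>j<s. ht j \<in> bsubring n (z ` {..<s})) \<and>
           set gs \<subseteq> bsubring n (z ` {..<s}) \<and>
           G = {badd (bvar (z j)) (ht j) | j. j < s} \<union> set gs"
proof -
  let ?Zs = "z ` {..<s}"
  have Zs: "\<forall>x\<in>?Zs. {x} \<in> lead_terms" using zL by blast
  note GI = reduced_gb_subset[OF G] and G0 = reduced_gb_nonzero[OF G]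
  have gb: "g \<in> bpolys n" "g \<noteq> bzero" if "g \<in> G" for g using that GI G0 ideal_bpolys by blast+
  have "\<forall>j. \<exists>g. j < s \<longrightarrow> g \<in> G \<and> bLT le g = {z j}"
    using reduced_gb_lead_var[OF Zs G] by blast
  then obtain gj where gj: "\<And>j. j < s \<Longrightarrow> gj j \<in> G \<and> bLT le (gj j) = {z j}" by metis
  define ht where "ht j = badd (gj j) (bvar (z j))" for j
  have "ht j \<in> bsubring n ?Zs" if j: "j < s" for j
    unfolding ht_def
  proof (rule badd_bvar_mem_bsubring)
    show "gj j \<in> bpolys n" "{z j} \<in> gj j" using gj[OF j] gb bLT_mem[OF to] by metis+
    show "\<forall>v\<in>gj j. v \<noteq> {z j} \<longrightarrow> v \<inter> ?Zs = {}"
      using reduced_gb_tail_avoids[OF Zs G] gj[OF j] by metis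
  qed
  moreover have "g \<in> bsubring n ?Zs" if g: "g \<in> G - gj ` {..<s}" for g
  proof -
    have "v \<inter> ?Zs = {}" if v: "v \<in> g" for v
    proof (cases "v = bLT le g")
      case True
      have "z k \<notin> bLT le g" if "k < s" for k
        using reduced_gb_lead_avoids[of G g "gj k" "z k"] G g gj[OF that] that by blast
      then show ?thesis using True by blast
    qed (use reduced_gb_tail_avoids[OF Zs G] g v in blast)
    then show ?thesis unfolding bsubring_def using g gb by blast
  qed
  moreover obtain gs where gs: "set gs = G - gj ` {..<s}"
    using finite_list[of "G - gj ` {..<s}"] reduced_gb_finite[OF G] by blast
  moreover have "badd (bvar (z j)) (ht j) = gj j" for j
    unfolding ht_def badd_def by blast
  then have "G = {badd (bvar (z j)) (ht j) | j. j < s} \<union> set gs"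
    using gj gs by auto
  ultimately show ?thesis by blast
qed

end

section \<open>Elimination orderings\<close>

lemma elimination_ordering_bLT:
  assumes tau: "elimination_ordering n \<tau> Zs" and f: "f \<in> bpolys n" "{z} \<in> f" "z \<in> Zs"
    and tail: "\<forall>u\<in>f. u \<noteq> {z} \<longrightarrow> u \<inter> Zs = {}"
  shows "bLT \<tau> f = {z}"
proof -
  have to: "term_ordering n \<tau>" using tau unfolding elimination_ordering_def by blast
  have fp: "f \<subseteq> Pow {..<n}" using f(1) unfolding bpolys_def by simp
  have zn: "{z} \<subseteq> {..<n}" using fp f(2) by blast
  have "\<tau> (sqf u) (sqf {z})" if u: "u \<in> f" for u
  proof (cases "u = {z}")
    case True
    then show ?thesis using term_ordering_refl[OF to zn] by simp
  next
    case False
    then have "\<forall>y\<in>Zs. sqf u y = 0" using tail u unfolding sqf_def by auto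
    moreover have "sqf {z} z > 0" unfolding sqf_def by simp
    moreover have "sqf u \<in> bmonos n" "sqf {z} \<in> bmonos n" using u fp zn by (simp_all add: sqf_bmonos subset_iff)
    ultimately show ?thesis using tau f(3) unfolding elimination_ordering_def by blast
  qed
  then show ?thesis using bLT_eqI[OF to fp f(2)] by blast
qed

lemma coherently_Z_separating_tail_avoids:
  assumes ideal: "bideal n I" and sigma: "term_ordering n \<sigma>"
    and sep: "coherently_Z_separating n \<sigma> I s z f" and j: "j < s"
    and u: "u \<in> f j" "u \<noteq> {z j}"
  shows "u \<inter> z ` {..<s} = {}"
proof -
  have fI: "f j \<in> I" and fz: "f j \<noteq> bzero" and lt: "bLT \<sigma> (f j) = {z j}"
    and coh: "\<forall>k<s. k \<noteq> j \<longrightarrow> z k \<notin> u"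
    using sep j u(1) unfolding coherently_Z_separating_def by blast+
  have fb: "f j \<in> bpolys n" using fI bideal_subset[OF ideal] by blast
  have un: "u \<subseteq> {..<n}" using bpolys_term_subset[OF fb u(1)] .
  have zjn: "{z j} \<subseteq> {..<n}" using bLT_subset[OF sigma fb fz] lt by simp
  have "z j \<notin> u"
  proof
    assume "z j \<in> u"
    then have "\<sigma> (sqf {z j}) (sqf u)" using term_ordering_subset[OF sigma _ un] by blast
    moreover have "\<sigma> (sqf u) (sqf {z j})" using bLT_greatest[OF sigma fb fz u(1)] lt by simp
    ultimately show False using term_ordering_antisym[OF sigma un zjn] u(2) by blast
  qed
  then show ?thesis using coh by blast
qed

lemma coherently_Z_separating_tail_bsubring:
  assumes ideal: "bideal n I" and sigma: "term_ordering n \<sigma>"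
    and sep: "coherently_Z_separating n \<sigma> I s z f" and j: "j < s"
  shows "badd (f j) (bvar (z j)) \<in> bsubring n (z ` {..<s})"
proof (rule badd_bvar_mem_bsubring)
  have fI: "f j \<in> I" and fz: "f j \<noteq> bzero" and lt: "bLT \<sigma> (f j) = {z j}"
    using sep j unfolding coherently_Z_separating_def by blast+
  show fb: "f j \<in> bpolys n" using fI bideal_subset[OF ideal] by blast
  show "{z j} \<in> f j" using bLT_mem[OF sigma fb fz] lt by simp
  show "\<forall>u\<in>f j. u \<noteq> {z j} \<longrightarrow> u \<inter> z ` {..<s} = {}"
    using coherently_Z_separating_tail_avoids[OF ideal sigma sep j] by blast
qed

theorem coherently_Z_separating_elimination:
  assumes ideal: "bideal n I" and sigma: "term_ordering n \<sigma>"
    and sep: "coherently_Z_separating n \<sigma> I s z f"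
    and tau: "elimination_ordering n \<tau> (z ` {..<s})"
  shows "bideal_gen n {bvar (z j) | j. j < s} \<subseteq> bLT_ideal n \<tau> I"
  unfolding bLT_ideal_def
proof (rule bideal_gen_mono, rule subsetI)
  fix x assume "x \<in> {bvar (z j) | j. j < s}"
  then obtain j where j: "j < s" and x: "x = bvar (z j)" by blast
  have fI: "f j \<in> I" and fz: "f j \<noteq> bzero" and lt: "bLT \<sigma> (f j) = {z j}"
    using sep j unfolding coherently_Z_separating_def by blast+
  have fb: "f j \<in> bpolys n" using fI bideal_subset[OF ideal] by blast
  have "bLT \<tau> (f j) = {z j}"
  proof (rule elimination_ordering_bLT[OF tau fb])
    show "{z j} \<in> f j" using bLT_mem[OF sigma fb fz] lt by simp
    show "z j \<in> z ` {..<s}" using j by simp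
    show "\<forall>u\<in>f j. u \<noteq> {z j} \<longrightarrow> u \<inter> z ` {..<s} = {}"
      using coherently_Z_separating_tail_avoids[OF ideal sigma sep j] by blast
  qed
  then show "x \<in> {{bLT \<tau> g} | g. g \<in> I \<and> g \<noteq> bzero}"
    unfolding x bvar_def using fI fz by blast
qed

section \<open>Eliminating the separated variables\<close>

locale variable_elimination =
  fixes n :: nat and I :: "bpoly set" and s :: nat and z :: "nat \<Rightarrow> nat" and h :: "nat \<Rightarrow> bpoly"
  assumes ideal: "bideal n I" and z_inj: "inj_on z {..<s}"
    and h_congruent: "\<forall>j<s. badd (bvar (z j)) (h j) \<in> I"
    and h_bsubring: "\<forall>j<s. h j \<in> bsubring n (z ` {..<s})"
begin

definition phi_img :: "nat \<Rightarrow> bpoly" where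
  "phi_img = (\<lambda>i. if i \<in> z ` {..<s} then h (THE j. j < s \<and> z j = i) else bvar i)"

definition phi :: "bpoly \<Rightarrow> bpoly" where
  "phi = bsubst phi_img"

lemma phi_img_z: "j < s \<Longrightarrow> phi_img (z j) = h j"
proof -
  assume j: "j < s"
  have "(THE k. k < s \<and> z k = z j) = j"
    using j z_inj unfolding inj_on_def by (intro the_equality) auto
  then show ?thesis unfolding phi_img_def using j by simp
qed

lemma phi_img_bsubring: "i < n \<Longrightarrow> phi_img i \<in> bsubring n (z ` {..<s})"
proof (cases "i \<in> z ` {..<s}")
  case True
  then obtain j where "j < s" "i = z j" by blast
  then show ?thesis using phi_img_z h_bsubring by simp
next
  case False
  assume "i < n"
  then show ?thesis
    using False bpolys_bvar unfolding phi_img_def bsubring_def bvar_def by auto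
qed

lemma phi_img_congruent: "i < n \<Longrightarrow> badd (bvar i) (phi_img i) \<in> I"
proof (cases "i \<in> z ` {..<s}")
  case True
  then obtain j where "j < s" "i = z j" by blast
  then show ?thesis using phi_img_z h_congruent by simp
next
  case False
  then show ?thesis using bzero_mem_bideal[OF ideal] unfolding phi_img_def by (simp add: badd_self)
qed

lemma phi_img_bpolys: "\<forall>i<n. phi_img i \<in> bpolys n"
  using phi_img_bsubring unfolding bsubring_def by blast

lemma phi_bsubring: "p \<in> bpolys n \<Longrightarrow> phi p \<in> bsubring n (z ` {..<s})"
  unfolding phi_def using phi_img_bsubring by (intro bsubst_bsubring) auto

lemma phi_badd:
  assumes "p \<in> bpolys n" "q \<in> bpolys n"
  shows "phi (badd p q) = badd (phi p) (phi q)"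
  unfolding phi_def using assms phi_img_bpolys by (rule bsubst_badd)

lemma phi_bmul:
  assumes "p \<in> bpolys n" "q \<in> bpolys n"
  shows "phi (bmul p q) = bmul (phi p) (phi q)"
  unfolding phi_def using assms phi_img_bpolys by (rule bsubst_bmul)

lemma phi_bone: "phi bone = bone"
  unfolding phi_def using phi_img_bpolys by (rule bsubst_bone)

text \<open>Each substituted variable is congruent to its image, hence so is every polynomial.\<close>

lemma badd_phi_mem_ideal: "p \<in> bpolys n \<Longrightarrow> badd p (phi p) \<in> I"
  using bsubst_congruent[OF ideal, of p bvar phi_img] bsubst_bvar[of p n]
    phi_img_congruent phi_img_bpolys bpolys_bvar
  unfolding phi_def by simp

lemma phi_mem_ideal_iff: "p \<in> bpolys n \<Longrightarrow> phi p \<in> I \<longleftrightarrow> p \<in> I"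
  using badd_mem_bideal_iff[OF ideal badd_phi_mem_ideal, of p p] by (simp add: badd_cancel_left)

text \<open>Part (b): the conjuncts say that \<open>\<phi>\<close> induces a well-defined, injective and surjective
  ring homomorphism \<open>B\<^sub>n/I \<rightarrow> B\<^sub>m/(I \<inter> B\<^sub>m)\<close>.\<close>

theorem phi_quotient_isomorphism:
  defines "Bm \<equiv> bsubring n (z ` {..<s})"
  shows "(\<forall>p\<in>bpolys n. phi p \<in> Bm) \<and>
    (\<forall>p\<in>bpolys n. \<forall>q\<in>bpolys n. phi (badd p q) = badd (phi p) (phi q) \<and> phi (bmul p q) = bmul (phi p) (phi q)) \<and>
    phi bone = bone \<and>
    (\<forall>p\<in>bpolys n. \<forall>q\<in>bpolys n. badd p q \<in> I \<longrightarrow> badd (phi p) (phi q) \<in> I \<inter> Bm) \<and>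
    (\<forall>p\<in>bpolys n. \<forall>q\<in>bpolys n. badd (phi p) (phi q) \<in> I \<inter> Bm \<longrightarrow> badd p q \<in> I) \<and>
    (\<forall>g\<in>Bm. \<exists>p\<in>bpolys n. badd (phi p) g \<in> I \<inter> Bm)"
proof -
  have kernel: "badd (phi p) (phi q) \<in> I \<longleftrightarrow> badd p q \<in> I" if "p \<in> bpolys n" "q \<in> bpolys n" for p q
    using phi_mem_ideal_iff[OF bpolys_badd[OF that]] phi_badd[OF that] by simp
  have image: "badd (phi p) (phi q) \<in> Bm" if "p \<in> bpolys n" "q \<in> bpolys n" for p q
    unfolding Bm_def using phi_bsubring that by (intro bsubring_badd)
  have onto: "badd (phi g) g \<in> I \<inter> Bm" if g: "g \<in> Bm" for g
  proof -
    have gb: "g \<in> bpolys n" using g unfolding Bm_def bsubring_def by blast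
    have "badd (phi g) g \<in> I" using badd_phi_mem_ideal[OF gb] by (simp add: badd_commute)
    moreover have "badd (phi g) g \<in> Bm" using g phi_bsubring[OF gb] unfolding Bm_def by (intro bsubring_badd)
    ultimately show ?thesis by blast
  qed
  show ?thesis
  proof (intro conjI ballI impI)
    show "phi p \<in> Bm" if "p \<in> bpolys n" for p using phi_bsubring[OF that] unfolding Bm_def .
    show "phi (badd p q) = badd (phi p) (phi q)" "phi (bmul p q) = bmul (phi p) (phi q)"
      if "p \<in> bpolys n" "q \<in> bpolys n" for p q
      using phi_badd[OF that] phi_bmul[OF that] by simp_all
    show "phi bone = bone" by (rule phi_bone)
    show "badd (phi p) (phi q) \<in> I \<inter> Bm" if "p \<in> bpolys n" "q \<in> bpolys n" "badd p q \<in> I" for p q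
      using kernel[OF that(1,2)] image[OF that(1,2)] that(3) by blast
    show "badd p q \<in> I" if "p \<in> bpolys n" "q \<in> bpolys n" "badd (phi p) (phi q) \<in> I \<inter> Bm" for p q
      using kernel[OF that(1,2)] that(3) by blast
    show "\<exists>p\<in>bpolys n. badd (phi p) g \<in> I \<inter> Bm" if g: "g \<in> Bm" for g
    proof
      show "g \<in> bpolys n" using g unfolding Bm_def bsubring_def by blast
    qed (rule onto[OF g])
  qed
qed

end

theorem proposition6p2:
  fixes n s :: nat and I :: "bpoly set" and z :: "nat \<Rightarrow> nat"
    and \<sigma> :: "(nat \<Rightarrow> nat) \<Rightarrow> (nat \<Rightarrow> nat) \<Rightarrow> bool"
    and f h :: "nat \<Rightarrow> bpoly"
  assumes ideal: "bideal n I" and proper: "bone \<notin> I"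
    and z_inj: "inj_on z {..<s}" and z_range: "\<forall>j<s. z j < n"
    and sigma: "term_ordering n \<sigma>"
    and sep: "coherently_Z_separating n \<sigma> I s z f"
    and h_def: "\<forall>j<s. h j = badd (f j) (bvar (z j))"
  shows
    "((\<exists>G. is_reduced_boolean_gb n \<sigma> I G) \<and>
     (\<forall>G. is_reduced_boolean_gb n \<sigma> I G \<longrightarrow>
        (\<exists>ht :: nat \<Rightarrow> bpoly. \<exists>gs :: bpoly list.
           (\<forall>j<s. ht j \<in> bsubring n (z ` {..<s})) \<and>
           set gs \<subseteq> bsubring n (z ` {..<s}) \<and>
           G = {badd (bvar (z j)) (ht j) | j. j < s} \<union> set gs))) \<and>
    (let Bm = bsubring n (z ` {..<s});
         Im = I \<inter> Bm;
         \<phi> = bsubst (\<lambda>i. if i \<in> z ` {..<s} then h (THE j. j < s \<and> z j = i) else bvar i)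
     in (\<forall>p\<in>bpolys n. \<phi> p \<in> Bm) \<and>
        (\<forall>p\<in>bpolys n. \<forall>q\<in>bpolys n. \<phi> (badd p q) = badd (\<phi> p) (\<phi> q)
                                    \<and> \<phi> (bmul p q) = bmul (\<phi> p) (\<phi> q)) \<and>
        \<phi> bone = bone \<and>
        (\<forall>p\<in>bpolys n. \<forall>q\<in>bpolys n. badd p q \<in> I \<longrightarrow> badd (\<phi> p) (\<phi> q) \<in> Im) \<and>
        (\<forall>p\<in>bpolys n. \<forall>q\<in>bpolys n. badd (\<phi> p) (\<phi> q) \<in> Im \<longrightarrow> badd p q \<in> I) \<and>
        (\<forall>g\<in>Bm. \<exists>p\<in>bpolys n. badd (\<phi> p) g \<in> Im)) \<and>
    (\<forall>\<tau>. elimination_ordering n \<tau> (z ` {..<s}) \<longrightarrow>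
        bideal_gen n {bvar (z j) | j. j < s} \<subseteq> bLT_ideal n \<tau> I)"
proof -
  interpret ordered_bideal n I \<sigma> using ideal proper sigma by unfold_locales
  have "h j \<in> bsubring n (z ` {..<s}) \<and> badd (bvar (z j)) (h j) \<in> I" if j: "j < s" for j
  proof -
    have "badd (bvar (z j)) (h j) = f j" using h_def j unfolding badd_def by auto
    then show ?thesis
      using coherently_Z_separating_tail_bsubring[OF ideal sigma sep j] sep j h_def
      unfolding coherently_Z_separating_def by simp
  qed
  then interpret variable_elimination n I s z h
    using ideal z_inj by unfold_locales auto
  show ?thesis
    unfolding Let_def phi_img_def[symmetric] phi_def[symmetric]
    using reduced_gb_exists reduced_gb_split[OF coherently_Z_separating_lead_terms[OF sep]]
      phi_quotient_isomorphism coherently_Z_separating_elimination[OF ideal sigma sep]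
    by blast
qed

end
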